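(* Let $P$ and $Q$ be broken combs, and let $(P,c,x)$ and $(Q,c',x')$ be $n$-generated models on them, rooted at their roots, which are $3$-bisimilar. Then they are (fully) bisimilar.
   Context: An $n$-comb is a poset $\{x_1,\dots,x_n\}\sqcup\{y_1,\dots,y_n\}$ where $y_i\le z$ iff $y_i=z$, and $x_i\le z$ iff $z=x_j$ with $i\le j$ or $z=y_j$ with $i\le j$. A broken comb is a subposet of some $n$-comb containing all of $x_1,\dots,x_n$. A model over $n$ is a finite rooted poset with an order-preserving colouring into subsets of $\{p_1,\dots,p_n\}$; it is $n$-generated if no two distinct points generate bisimilar rooted submodels. Bisimulation: a relation relating the roots, preserving colours, with forth and back conditions along $\le$. $k$-bisimulation: relations $S_k\subseteq\dots\subseteq S_0$, roots related by $S_k$, $S_0$ colour-preserving, forth and back conditions from $S_{j+1}$ to $S_j$ for $j<k$. *)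

theory Defs
  imports Main
begin

text \<open>A model over n: carrier A, order le on A, colouring c into subsets of
  {p_1,...,p_n} (represented as subsets of {1..n}), root r.\<close>

definition is_model :: "nat \<Rightarrow> 'a set \<Rightarrow> ('a \<Rightarrow> 'a \<Rightarrow> bool) \<Rightarrow> ('a \<Rightarrow> nat set) \<Rightarrow> 'a \<Rightarrow> bool" where
  "is_model n A le c r \<longleftrightarrow>
     finite A \<and> r \<in> A \<and>
     (\<forall>a\<in>A. le a a) \<and>
     (\<forall>a\<in>A. \<forall>b\<in>A. le a b \<and> le b a \<longrightarrow> a = b) \<and>
     (\<forall>a\<in>A. \<forall>b\<in>A. \<forall>d\<in>A. le a b \<and> le b d \<longrightarrow> le a d) \<and>
     (\<forall>a\<in>A. le r a) \<and>
     (\<forall>a\<in>A. c a \<subseteq> {1..n}) \<and>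
     (\<forall>a\<in>A. \<forall>b\<in>A. le a b \<longrightarrow> c a \<subseteq> c b)"

definition is_bisimulation ::
  "('a \<times> 'b) set \<Rightarrow> 'a set \<Rightarrow> ('a \<Rightarrow> 'a \<Rightarrow> bool) \<Rightarrow> ('a \<Rightarrow> nat set) \<Rightarrow> 'a \<Rightarrow>
   'b set \<Rightarrow> ('b \<Rightarrow> 'b \<Rightarrow> bool) \<Rightarrow> ('b \<Rightarrow> nat set) \<Rightarrow> 'b \<Rightarrow> bool" where
  "is_bisimulation Z A le c r B le' c' r' \<longleftrightarrow>
     Z \<subseteq> A \<times> B \<and> (r, r') \<in> Z \<and>
     (\<forall>(u, v)\<in>Z. c u = c' v) \<and>
     (\<forall>(u, v)\<in>Z. \<forall>u'\<in>A. le u u' \<longrightarrow> (\<exists>v'\<in>B. le' v v' \<and> (u', v') \<in> Z)) \<and>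
     (\<forall>(u, v)\<in>Z. \<forall>v'\<in>B. le' v v' \<longrightarrow> (\<exists>u'\<in>A. le u u' \<and> (u', v') \<in> Z))"

definition bisimilar ::
  "'a set \<Rightarrow> ('a \<Rightarrow> 'a \<Rightarrow> bool) \<Rightarrow> ('a \<Rightarrow> nat set) \<Rightarrow> 'a \<Rightarrow>
   'b set \<Rightarrow> ('b \<Rightarrow> 'b \<Rightarrow> bool) \<Rightarrow> ('b \<Rightarrow> nat set) \<Rightarrow> 'b \<Rightarrow> bool" where
  "bisimilar A le c r B le' c' r' \<longleftrightarrow> (\<exists>Z. is_bisimulation Z A le c r B le' c' r')"

definition is_k_bisimulation ::
  "nat \<Rightarrow> (nat \<Rightarrow> ('a \<times> 'b) set) \<Rightarrow> 'a set \<Rightarrow> ('a \<Rightarrow> 'a \<Rightarrow> bool) \<Rightarrow> ('a \<Rightarrow> nat set) \<Rightarrow> 'a \<Rightarrow>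
   'b set \<Rightarrow> ('b \<Rightarrow> 'b \<Rightarrow> bool) \<Rightarrow> ('b \<Rightarrow> nat set) \<Rightarrow> 'b \<Rightarrow> bool" where
  "is_k_bisimulation k S A le c r B le' c' r' \<longleftrightarrow>
     (\<forall>j\<le>k. S j \<subseteq> A \<times> B) \<and>
     (\<forall>j<k. S (Suc j) \<subseteq> S j) \<and>
     (r, r') \<in> S k \<and>
     (\<forall>(u, v)\<in>S 0. c u = c' v) \<and>
     (\<forall>j<k. \<forall>(u, v)\<in>S (Suc j). \<forall>u'\<in>A. le u u' \<longrightarrow> (\<exists>v'\<in>B. le' v v' \<and> (u', v') \<in> S j)) \<and>
     (\<forall>j<k. \<forall>(u, v)\<in>S (Suc j). \<forall>v'\<in>B. le' v v' \<longrightarrow> (\<exists>u'\<in>A. le u u' \<and> (u', v') \<in> S j))"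

definition k_bisimilar ::
  "nat \<Rightarrow> 'a set \<Rightarrow> ('a \<Rightarrow> 'a \<Rightarrow> bool) \<Rightarrow> ('a \<Rightarrow> nat set) \<Rightarrow> 'a \<Rightarrow>
   'b set \<Rightarrow> ('b \<Rightarrow> 'b \<Rightarrow> bool) \<Rightarrow> ('b \<Rightarrow> nat set) \<Rightarrow> 'b \<Rightarrow> bool" where
  "k_bisimilar k A le c r B le' c' r' \<longleftrightarrow> (\<exists>S. is_k_bisimulation k S A le c r B le' c' r')"

text \<open>Rooted submodel generated by a point w: the upset of w, rooted at w.\<close>

definition upset :: "'a set \<Rightarrow> ('a \<Rightarrow> 'a \<Rightarrow> bool) \<Rightarrow> 'a \<Rightarrow> 'a set" where
  "upset A le w = {v \<in> A. le w v}"

definition n_generated :: "'a set \<Rightarrow> ('a \<Rightarrow> 'a \<Rightarrow> bool) \<Rightarrow> ('a \<Rightarrow> nat set) \<Rightarrow> bool" where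
  "n_generated A le c \<longleftrightarrow>
     (\<forall>u\<in>A. \<forall>w\<in>A. u \<noteq> w \<longrightarrow>
        \<not> bisimilar (upset A le u) le c u (upset A le w) le c w)"

datatype cpt = X nat | Y nat

fun comb_le :: "cpt \<Rightarrow> cpt \<Rightarrow> bool" where
  "comb_le (Y i) z = (z = Y i)"
| "comb_le (X i) (X j) = (i \<le> j)"
| "comb_le (X i) (Y j) = (i \<le> j)"

text \<open>The m-comb has points x_1..x_m, y_1..y_m.  A broken comb is the subposet
  containing all x_1..x_m and the teeth y_i for i in T, T \<subseteq> {1..m}.\<close>

definition broken_comb :: "nat \<Rightarrow> nat set \<Rightarrow> cpt set" where
  "broken_comb m T = {X i | i. 1 \<le> i \<and> i \<le> m} \<union> {Y i | i. i \<in> T}"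

end

theory Submission
  imports Defs
begin

text \<open>In an n-generated model distinct maximal points carry distinct colours, a point whose
  upset is monochrome is maximal, and on a broken comb a tooth-less x_j is coloured strictly
  below x_(j+1); each time the alternative would give two distinct points with bisimilar
  generated submodels. Consequently the order of such a model is recovered from the colouring:
  u \<le> u' iff c u \<subseteq> c u' and every colour of a maximal point above u' is the colour of a
  maximal point above u. A 3-bisimulation relates every point, at depth 2, to a point with the
  same colour and the same colours of maximal points above it, since a maximal point can only
  be matched by a point with monochrome upset. Relating all points of equal colour and equal
  maximal colours is then a bisimulation.\<close>

definition is_maximal :: "'a set \<Rightarrow> ('a \<Rightarrow> 'a \<Rightarrow> bool) \<Rightarrow> 'a \<Rightarrow> bool" where
  "is_maximal A le w \<longleftrightarrow> w \<in> A \<and> (\<forall>z\<in>A. le w z \<longrightarrow> z = w)"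

definition max_colours :: "'a set \<Rightarrow> ('a \<Rightarrow> 'a \<Rightarrow> bool) \<Rightarrow> ('a \<Rightarrow> nat set) \<Rightarrow> 'a \<Rightarrow> nat set set" where
  "max_colours A le c u = c ` {w. is_maximal A le w \<and> le u w}"

locale rooted_model =
  fixes n :: nat and A :: "'a set" and le :: "'a \<Rightarrow> 'a \<Rightarrow> bool" and c :: "'a \<Rightarrow> nat set" and r :: 'a
  assumes model: "is_model n A le c r"
begin

lemma finite_carrier: "finite A"
  using model unfolding is_model_def by blast
lemma refl_le: "a \<in> A \<Longrightarrow> le a a"
  using model unfolding is_model_def by blast
lemma antisym_le: "a \<in> A \<Longrightarrow> b \<in> A \<Longrightarrow> le a b \<Longrightarrow> le b a \<Longrightarrow> a = b"
  using model unfolding is_model_def by blast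
lemma trans_le: "a \<in> A \<Longrightarrow> b \<in> A \<Longrightarrow> d \<in> A \<Longrightarrow> le a b \<Longrightarrow> le b d \<Longrightarrow> le a d"
  using model unfolding is_model_def by blast
lemma root_le: "a \<in> A \<Longrightarrow> le r a"
  using model unfolding is_model_def by blast
lemma colour_mono: "a \<in> A \<Longrightarrow> b \<in> A \<Longrightarrow> le a b \<Longrightarrow> c a \<subseteq> c b"
  using model unfolding is_model_def by blast

lemma exists_maximal_above:
  assumes "u \<in> A"
  obtains w where "is_maximal A le w" "le u w"
proof -
  obtain w where w: "w \<in> A" "le u w"
    and least: "\<And>z. z \<in> A \<and> le u z \<Longrightarrow> card (upset A le w) \<le> card (upset A le z)"
    using ex_has_least_nat[of "\<lambda>w. w \<in> A \<and> le u w" u "\<lambda>w. card (upset A le w)"] assms refl_le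
    by blast
  have "z = w" if z: "z \<in> A" "le w z" for z
  proof (rule ccontr)
    assume "z \<noteq> w"
    then have "upset A le z \<subset> upset A le w"
      using z w antisym_le trans_le refl_le unfolding upset_def by blast
    then have "card (upset A le z) < card (upset A le w)"
      using finite_carrier by (simp add: psubset_card_mono upset_def)
    moreover have "le u z" using trans_le w z assms by blast
    ultimately show False using least z by fastforce
  qed
  then show thesis using that w by (auto simp: is_maximal_def)
qed

lemma max_colours_antimono:
  "u \<in> A \<Longrightarrow> u' \<in> A \<Longrightarrow> le u u' \<Longrightarrow> max_colours A le c u' \<subseteq> max_colours A le c u"
  unfolding max_colours_def is_maximal_def using trans_le by blast

lemma max_colours_maximal: "is_maximal A le u \<Longrightarrow> max_colours A le c u = {c u}"
  unfolding max_colours_def is_maximal_def using refl_le by auto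

lemma bisimilar_upset_maximal:
  assumes "is_maximal A le w" "v \<in> A" "\<forall>z\<in>A. le v z \<longrightarrow> c z = c w"
  shows "bisimilar (upset A le v) le c v (upset A le w) le c w"
proof -
  have "upset A le w = {w}"
    using assms(1) refl_le by (auto simp: upset_def is_maximal_def)
  then have "is_bisimulation (upset A le v \<times> {w}) (upset A le v) le c v (upset A le w) le c w"
    using assms refl_le by (auto simp: is_bisimulation_def upset_def is_maximal_def)
  then show ?thesis unfolding bisimilar_def by blast
qed

lemma bisimilar_upset_cover:
  assumes u: "u \<in> A" and w: "w \<in> A" "le u w" and colour: "c u = c w"
    and cover: "\<forall>z\<in>A. le u z \<longrightarrow> z = u \<or> le w z"
  shows "bisimilar (upset A le u) le c u (upset A le w) le c w"
proof -
  define Z where "Z = insert (u, w) (Id_on (upset A le w))"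
  have sub: "upset A le w \<subseteq> upset A le u"
    using u w trans_le unfolding upset_def by blast
  have "Z \<subseteq> upset A le u \<times> upset A le w"
    using sub u w refl_le unfolding Z_def upset_def by blast
  moreover have "\<exists>v'\<in>upset A le w. le v v' \<and> (u', v') \<in> Z"
    if "(x, v) \<in> Z" "u' \<in> upset A le u" "le x u'" for x v u'
  proof (cases "x = u \<and> v = w")
    case True
    then show ?thesis
      using that(2) cover w refl_le unfolding Z_def upset_def by fastforce
  next
    case False
    then have "x = v" "v \<in> upset A le w" using that(1) unfolding Z_def by auto
    then have "u' \<in> upset A le w"
      using that(2,3) w(1) trans_le[of w v u'] unfolding upset_def by auto
    then show ?thesis using \<open>x = v\<close> that(3) unfolding Z_def by blast
  qed
  moreover have "\<exists>u'\<in>upset A le u. le x u' \<and> (u', v') \<in> Z"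
    if "(x, v) \<in> Z" "v' \<in> upset A le w" "le v v'" for x v v'
  proof -
    have "le x v'"
      using that u w trans_le[of u w v'] unfolding Z_def upset_def by auto
    then show ?thesis using that(2) sub unfolding Z_def by blast
  qed
  moreover have "\<forall>(x, v)\<in>Z. c x = c v"
    using colour unfolding Z_def by auto
  moreover have "(u, w) \<in> Z" unfolding Z_def by simp
  ultimately have "is_bisimulation Z (upset A le u) le c u (upset A le w) le c w"
    unfolding is_bisimulation_def by blast
  then show ?thesis unfolding bisimilar_def by blast
qed

end

locale n_generated_model = rooted_model +
  assumes generated: "n_generated A le c"
begin

lemma eq_if_bisimilar_upsets:
  "u \<in> A \<Longrightarrow> w \<in> A \<Longrightarrow> bisimilar (upset A le u) le c u (upset A le w) le c w \<Longrightarrow> u = w"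
  using generated unfolding n_generated_def by blast

lemma maximal_colour_inj:
  assumes u: "is_maximal A le u" and w: "is_maximal A le w" and colour: "c u = c w"
  shows "u = w"
proof -
  have "u \<in> A" "w \<in> A" using u w by (simp_all add: is_maximal_def)
  moreover have "\<forall>z\<in>A. le u z \<longrightarrow> c z = c w"
    using u colour unfolding is_maximal_def by blast
  ultimately show ?thesis
    using bisimilar_upset_maximal[OF w] eq_if_bisimilar_upsets by blast
qed

lemma maximal_if_upset_monochrome:
  assumes v: "v \<in> A" and monochrome: "\<forall>z\<in>A. le v z \<longrightarrow> c z = c v"
  shows "is_maximal A le v"
proof -
  obtain w where w: "is_maximal A le w" "le v w"
    using exists_maximal_above v by blast
  have "w \<in> A" using w(1) by (simp add: is_maximal_def)
  then have "\<forall>z\<in>A. le v z \<longrightarrow> c z = c w"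
    using monochrome w(2) by metis
  then have "v = w"
    using v \<open>w \<in> A\<close> bisimilar_upset_maximal[OF w(1)] eq_if_bisimilar_upsets by blast
  then show ?thesis using w(1) by simp
qed

lemma eq_if_covered_same_colour:
  "u \<in> A \<Longrightarrow> w \<in> A \<Longrightarrow> le u w \<Longrightarrow> c u = c w \<Longrightarrow> \<forall>z\<in>A. le u z \<longrightarrow> z = u \<or> le w z \<Longrightarrow> u = w"
  using bisimilar_upset_cover eq_if_bisimilar_upsets by blast

lemma le_if_type_le_of_maximal:
  assumes "u \<in> A" "u' \<in> A" "c u \<subseteq> c u'"
    and "max_colours A le c u' \<subseteq> max_colours A le c u"
    and "is_maximal A le u \<or> is_maximal A le u'"
  shows "le u u'"
proof (cases "is_maximal A le u'")
  case True
  then have "c u' \<in> max_colours A le c u" using assms(4) max_colours_maximal by blast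
  then obtain w where "is_maximal A le w" "le u w" "c w = c u'" unfolding max_colours_def by blast
  then show ?thesis using True maximal_colour_inj by blast
next
  case False
  with assms(5) have u: "is_maximal A le u" by blast
  \<comment> \<open>every maximal point above u' has the colour of u, which lies below c u'\<close>
  have "c z = c u'" if z: "z \<in> A" "le u' z" for z
  proof -
    obtain w where w: "is_maximal A le w" "le z w" using exists_maximal_above z(1) by blast
    then have "c w \<in> max_colours A le c u'"
      using z assms(2) trans_le unfolding max_colours_def is_maximal_def by blast
    then have "c w = c u" using assms(4) max_colours_maximal[OF u] by blast
    moreover have "c u' \<subseteq> c z" "c z \<subseteq> c w"
      using z w assms(2) colour_mono by (auto simp: is_maximal_def)
    ultimately show ?thesis using assms(3) by blast
  qed
  then have "is_maximal A le u'" using maximal_if_upset_monochrome assms(2) by blast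
  then show ?thesis using False by blast
qed

end

lemma is_k_bisimulation_converse:
  "is_k_bisimulation k S A le c r B le' c' r' \<Longrightarrow>
   is_k_bisimulation k (\<lambda>j. (S j)\<inverse>) B le' c' r' A le c r"
  unfolding is_k_bisimulation_def by fast

lemma is_k_bisimulation_subset:
  "is_k_bisimulation k S A le c r B le' c' r' \<Longrightarrow> j \<le> k \<Longrightarrow> S j \<subseteq> A \<times> B"
  unfolding is_k_bisimulation_def by blast

lemma is_k_bisimulation_antimono:
  assumes "is_k_bisimulation k S A le c r B le' c' r'" "i \<le> j" "j \<le> k"
  shows "S j \<subseteq> S i"
  using assms(2,3)
proof (induction j rule: dec_induct)
  case (step l)
  then have "S (Suc l) \<subseteq> S l"
    using assms(1) unfolding is_k_bisimulation_def by (simp add: Suc_le_eq)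
  with step show ?case by simp
qed simp

lemma is_k_bisimulation_colour:
  "is_k_bisimulation k S A le c r B le' c' r' \<Longrightarrow> (u, v) \<in> S j \<Longrightarrow> j \<le> k \<Longrightarrow> c u = c' v"
  using is_k_bisimulation_antimono[of k S A le c r B le' c' r' 0 j]
  unfolding is_k_bisimulation_def by fastforce

lemma is_k_bisimulation_forth:
  "is_k_bisimulation k S A le c r B le' c' r' \<Longrightarrow> j < k \<Longrightarrow> (u, v) \<in> S (Suc j) \<Longrightarrow>
   u' \<in> A \<Longrightarrow> le u u' \<Longrightarrow> \<exists>v'\<in>B. le' v v' \<and> (u', v') \<in> S j"
  unfolding is_k_bisimulation_def by blast

lemma is_k_bisimulation_back:
  "is_k_bisimulation k S A le c r B le' c' r' \<Longrightarrow> j < k \<Longrightarrow> (u, v) \<in> S (Suc j) \<Longrightarrow>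
   v' \<in> B \<Longrightarrow> le' v v' \<Longrightarrow> \<exists>u'\<in>A. le u u' \<and> (u', v') \<in> S j"
  unfolding is_k_bisimulation_def by blast

lemma k_bisimulation_max_colours_subset:
  assumes B: "n_generated_model n B le' c' r'"
    and S: "is_k_bisimulation k S A le c r B le' c' r'" and k: "2 \<le> k" and uv: "(u, v) \<in> S 2"
  shows "max_colours A le c u \<subseteq> max_colours B le' c' v"
proof
  interpret B: n_generated_model n B le' c' r' by (fact B)
  fix d assume "d \<in> max_colours A le c u"
  then obtain w where w: "is_maximal A le w" "le u w" "d = c w"
    unfolding max_colours_def by blast
  have "w \<in> A" using w(1) by (simp add: is_maximal_def)
  then obtain v' where v': "v' \<in> B" "le' v v'" "(w, v') \<in> S 1"
    using is_k_bisimulation_forth[OF S _ uv[unfolded numeral_2_eq_2]] w(2) k by auto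
  \<comment> \<open>w is maximal, so by the back condition everything above v' has the colour of w\<close>
  have above_v': "c' z = c w" if z: "z \<in> B" "le' v' z" for z
  proof -
    obtain w' where w': "w' \<in> A" "le w w'" "(w', z) \<in> S 0"
      using is_k_bisimulation_back[OF S _ v'(3)[unfolded One_nat_def] z] k by auto
    then have "w' = w" using w(1) by (simp add: is_maximal_def)
    then show ?thesis using is_k_bisimulation_colour[OF S w'(3)] by simp
  qed
  then have "c' v' = c w" using B.refl_le v'(1) by blast
  then have "is_maximal B le' v'"
    using B.maximal_if_upset_monochrome v'(1) above_v' by simp
  then show "d \<in> max_colours B le' c' v"
    using v'(2) w(3) \<open>c' v' = c w\<close> unfolding max_colours_def by blast
qed

definition order_determined_by_colours ::
  "'a set \<Rightarrow> ('a \<Rightarrow> 'a \<Rightarrow> bool) \<Rightarrow> ('a \<Rightarrow> nat set) \<Rightarrow> bool" where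
  "order_determined_by_colours A le c \<longleftrightarrow>
    (\<forall>u\<in>A. \<forall>u'\<in>A. le u u' \<longleftrightarrow> c u \<subseteq> c u' \<and> max_colours A le c u' \<subseteq> max_colours A le c u)"

definition same_colour_type ::
  "'a set \<Rightarrow> ('a \<Rightarrow> 'a \<Rightarrow> bool) \<Rightarrow> ('a \<Rightarrow> nat set) \<Rightarrow>
   'b set \<Rightarrow> ('b \<Rightarrow> 'b \<Rightarrow> bool) \<Rightarrow> ('b \<Rightarrow> nat set) \<Rightarrow> ('a \<times> 'b) set" where
  "same_colour_type A le c B le' c' =
     {(u, v). u \<in> A \<and> v \<in> B \<and> c u = c' v \<and> max_colours A le c u = max_colours B le' c' v}"

lemma same_colour_type_is_bisimulation:
  assumes A: "order_determined_by_colours A le c" and B: "order_determined_by_colours B le' c'"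
    and root: "(r, r') \<in> same_colour_type A le c B le' c'"
    and total: "\<forall>u\<in>A. \<exists>v. (u, v) \<in> same_colour_type A le c B le' c'"
    and surj: "\<forall>v\<in>B. \<exists>u. (u, v) \<in> same_colour_type A le c B le' c'"
  shows "is_bisimulation (same_colour_type A le c B le' c') A le c r B le' c' r'"
proof -
  let ?Z = "same_colour_type A le c B le' c'"
  have "\<exists>v'\<in>B. le' v v' \<and> (u', v') \<in> ?Z" if "(u, v) \<in> ?Z" "u' \<in> A" "le u u'" for u v u'
  proof -
    obtain v' where "(u', v') \<in> ?Z" using total \<open>u' \<in> A\<close> by blast
    moreover have "le' v v'"
      using that calculation A B unfolding order_determined_by_colours_def same_colour_type_def
      by auto
    ultimately show ?thesis unfolding same_colour_type_def by blast
  qed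
  moreover have "\<exists>u'\<in>A. le u u' \<and> (u', v') \<in> ?Z" if "(u, v) \<in> ?Z" "v' \<in> B" "le' v v'" for u v v'
  proof -
    obtain u' where "(u', v') \<in> ?Z" using surj \<open>v' \<in> B\<close> by blast
    moreover have "le u u'"
      using that calculation A B unfolding order_determined_by_colours_def same_colour_type_def
      by auto
    ultimately show ?thesis unfolding same_colour_type_def by blast
  qed
  ultimately show ?thesis
    using root unfolding is_bisimulation_def same_colour_type_def by blast
qed

lemma is_k_bisimulation_below_root:
  assumes "rooted_model n A le c r" "is_k_bisimulation (Suc k) S A le c r B le' c' r'" "u \<in> A"
  shows "\<exists>v. (u, v) \<in> S k"
  using assms is_k_bisimulation_forth[of "Suc k" S A le c r B le' c' r' k r r' u]
  by (auto simp: is_k_bisimulation_def rooted_model.root_le)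

theorem bisimilar_if_3_bisimilar:
  assumes A: "n_generated_model n A le c r" "order_determined_by_colours A le c"
    and B: "n_generated_model n' B le' c' r'" "order_determined_by_colours B le' c'"
    and "k_bisimilar 3 A le c r B le' c' r'"
  shows "bisimilar A le c r B le' c' r'"
proof -
  let ?Z = "same_colour_type A le c B le' c'"
  obtain S where S: "is_k_bisimulation 3 S A le c r B le' c' r'"
    using assms(5) unfolding k_bisimilar_def by blast
  note S' = is_k_bisimulation_converse[OF S]
  have S2_Z: "(u, v) \<in> ?Z" if "(u, v) \<in> S 2" for u v
  proof -
    have "u \<in> A" "v \<in> B" using is_k_bisimulation_subset[OF S, of 2] that by auto
    moreover have "c u = c' v" using is_k_bisimulation_colour[OF S that] by simp
    moreover have "max_colours A le c u = max_colours B le' c' v"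
      using k_bisimulation_max_colours_subset[OF B(1) S _ that]
        k_bisimulation_max_colours_subset[OF A(1) S' _] that by fastforce
    ultimately show ?thesis unfolding same_colour_type_def by simp
  qed
  have "is_bisimulation ?Z A le c r B le' c' r'"
  proof (rule same_colour_type_is_bisimulation[OF A(2) B(2)])
    show "(r, r') \<in> ?Z"
      using S2_Z is_k_bisimulation_antimono[OF S, of 2 3] S
      by (auto simp: is_k_bisimulation_def)
    show "\<forall>u\<in>A. \<exists>v. (u, v) \<in> ?Z"
      using S2_Z is_k_bisimulation_below_root[OF n_generated_model.axioms(1)[OF A(1)], of 2]
        S[unfolded numeral_3_eq_3] by (metis numeral_2_eq_2)
    show "\<forall>v\<in>B. \<exists>u. (u, v) \<in> ?Z"
      using S2_Z is_k_bisimulation_below_root[OF n_generated_model.axioms(1)[OF B(1)], of 2]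
        S'[unfolded numeral_3_eq_3] by (metis numeral_2_eq_2 converse_iff)
  qed
  then show ?thesis unfolding bisimilar_def by blast
qed

lemma X_mem_broken_comb [simp]: "X i \<in> broken_comb m T \<longleftrightarrow> 1 \<le> i \<and> i \<le> m"
  by (auto simp: broken_comb_def)

lemma Y_mem_broken_comb [simp]: "Y i \<in> broken_comb m T \<longleftrightarrow> i \<in> T"
  by (auto simp: broken_comb_def)

lemma is_maximal_broken_comb_Y: "j \<in> T \<Longrightarrow> is_maximal (broken_comb m T) comb_le (Y j)"
  by (simp add: is_maximal_def)

locale n_generated_broken_comb = n_generated_model n "broken_comb m T" comb_le c r
  for n m T c r
begin

lemma colour_step_at_missing_tooth:
  assumes "j \<notin> T" "1 \<le> j" "j < m"
  shows "c (X j) \<noteq> c (X (Suc j))"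
proof
  assume same: "c (X j) = c (X (Suc j))"
  have cover: "\<forall>z\<in>broken_comb m T. comb_le (X j) z \<longrightarrow> z = X j \<or> comb_le (X (Suc j)) z"
  proof (intro ballI impI)
    fix z assume "z \<in> broken_comb m T" "comb_le (X j) z"
    with assms(1) show "z = X j \<or> comb_le (X (Suc j)) z" by (cases z) (auto simp: Suc_le_eq le_less)
  qed
  have "X j = X (Suc j)"
    by (rule eq_if_covered_same_colour[OF _ _ _ same cover]) (use assms in auto)
  then show False by simp
qed

lemma X_le_if_type_le:
  assumes i: "X i \<in> broken_comb m T" and k: "X k \<in> broken_comb m T"
    and colour: "c (X i) \<subseteq> c (X k)"
    and max: "max_colours (broken_comb m T) comb_le c (X k) \<subseteq> max_colours (broken_comb m T) comb_le c (X i)"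
  shows "i \<le> k"
proof (rule ccontr)
  assume "\<not> i \<le> k"
  then have ki: "k < i" by simp
  show False
  proof (cases "k \<in> T")
    case True
    then have "c (Y k) \<in> max_colours (broken_comb m T) comb_le c (X k)"
      unfolding max_colours_def using is_maximal_broken_comb_Y by auto
    then obtain w where w: "is_maximal (broken_comb m T) comb_le w" "comb_le (X i) w" "c w = c (Y k)"
      using max unfolding max_colours_def by auto
    then have "w = Y k"
      using maximal_colour_inj is_maximal_broken_comb_Y[OF True] by blast
    then show False using w(2) ki by simp
  next
    case False
    have "c (X k) \<subseteq> c (X (Suc k))" "c (X (Suc k)) \<subseteq> c (X i)"
      using colour_mono i k ki by auto
    moreover have "c (X k) \<noteq> c (X (Suc k))"
      using colour_step_at_missing_tooth False i k ki by simp
    ultimately show False using colour by blast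
  qed
qed

lemma order_determined: "order_determined_by_colours (broken_comb m T) comb_le c"
  unfolding order_determined_by_colours_def
proof (intro ballI iffI)
  fix u u' assume "u \<in> broken_comb m T" "u' \<in> broken_comb m T" "comb_le u u'"
  then show "c u \<subseteq> c u' \<and> max_colours (broken_comb m T) comb_le c u' \<subseteq> max_colours (broken_comb m T) comb_le c u"
    using colour_mono max_colours_antimono by blast
next
  fix u u'
  assume type: "u \<in> broken_comb m T" "u' \<in> broken_comb m T"
    "c u \<subseteq> c u' \<and> max_colours (broken_comb m T) comb_le c u' \<subseteq> max_colours (broken_comb m T) comb_le c u"
  show "comb_le u u'"
  proof (cases "\<exists>i k. u = X i \<and> u' = X k")
    case True
    then obtain i k where u: "u = X i" and u': "u' = X k" by blast
    have "i \<le> k" using X_le_if_type_le[of i k] type unfolding u u' by blast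
    then show ?thesis unfolding u u' by simp
  next
    case False
    then have "is_maximal (broken_comb m T) comb_le u \<or> is_maximal (broken_comb m T) comb_le u'"
      using type(1,2) is_maximal_broken_comb_Y by (cases u; cases u') auto
    then show ?thesis using type le_if_type_le_of_maximal by blast
  qed
qed

end

theorem mainTheorem9:
  fixes n m m' :: nat and T T' :: "nat set" and c c' :: "cpt \<Rightarrow> nat set"
  assumes "1 \<le> m" and "T \<subseteq> {1..m}" and "1 \<le> m'" and "T' \<subseteq> {1..m'}"
    and "is_model n (broken_comb m T) comb_le c (X 1)"
    and "is_model n (broken_comb m' T') comb_le c' (X 1)"
    and "n_generated (broken_comb m T) comb_le c"
    and "n_generated (broken_comb m' T') comb_le c'"
    and "k_bisimilar 3 (broken_comb m T) comb_le c (X 1) (broken_comb m' T') comb_le c' (X 1)"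
  shows "bisimilar (broken_comb m T) comb_le c (X 1) (broken_comb m' T') comb_le c' (X 1)"
proof -
  have P: "n_generated_broken_comb n m T c (X 1)"
    using assms(5,7) by unfold_locales
  have Q: "n_generated_broken_comb n m' T' c' (X 1)"
    using assms(6,8) by unfold_locales
  show ?thesis
    using bisimilar_if_3_bisimilar[OF P[unfolded n_generated_broken_comb_def]
        n_generated_broken_comb.order_determined[OF P]
        Q[unfolded n_generated_broken_comb_def] n_generated_broken_comb.order_determined[OF Q]
        assms(9)] .
qed

end
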